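(* For every weighted digraph $D$ with $w(D)>0$, $\mathrm{mac}(D)\ge l(\theta(D))\cdot w(D)$.
   Context: A weighted digraph $D=(V,A,w)$ is a digraph without loops or parallel arcs (opposite arcs allowed) with weights $w:A\to\mathbb{R}_{\ge0}$; $w(D)$ is the total arc weight. For a partition $(X,Y)$ of $V$, $w(X,Y)$ is the total weight of arcs from $X$ to $Y$, and $\mathrm{mac}(D)=\max_{(X,Y)}w(X,Y)$. For $v\in V$, $r(v)=w^+(v)-w^-(v)$ where $w^+(v)$ ($w^-(v)$) is the total weight of arcs leaving (entering) $v$; $r^+(D)=\sum_{r(x)>0}r(x)$; and $\theta(D)=r^+(D)/w(D)\in[0,1]$. For $0\le\theta\le1$, $l(\theta)=\frac14+\frac{\theta^2}{4(1-2\theta)}$ if $\theta<1/3$ and $l(\theta)=\theta$ if $\theta\ge1/3$. *)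

theory Defs
  imports Complex_Main
begin

definition weighted_digraph :: "'a set \<Rightarrow> ('a \<times> 'a) set \<Rightarrow> ('a \<times> 'a \<Rightarrow> real) \<Rightarrow> bool" where
  "weighted_digraph V A w \<longleftrightarrow> finite V \<and> A \<subseteq> V \<times> V \<and>
     (\<forall>(x, y) \<in> A. x \<noteq> y) \<and> (\<forall>a \<in> A. w a \<ge> 0)"

definition total_weight :: "('a \<times> 'a) set \<Rightarrow> ('a \<times> 'a \<Rightarrow> real) \<Rightarrow> real" where
  "total_weight A w = (\<Sum>a \<in> A. w a)"

definition cut_weight :: "('a \<times> 'a) set \<Rightarrow> ('a \<times> 'a \<Rightarrow> real) \<Rightarrow> 'a set \<Rightarrow> 'a set \<Rightarrow> real" where
  "cut_weight A w X Y = (\<Sum>a \<in> {(x, y) \<in> A. x \<in> X \<and> y \<in> Y}. w a)"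

definition mac :: "'a set \<Rightarrow> ('a \<times> 'a) set \<Rightarrow> ('a \<times> 'a \<Rightarrow> real) \<Rightarrow> real" where
  "mac V A w = Max ((\<lambda>X. cut_weight A w X (V - X)) ` Pow V)"

definition out_weight :: "('a \<times> 'a) set \<Rightarrow> ('a \<times> 'a \<Rightarrow> real) \<Rightarrow> 'a \<Rightarrow> real" where
  "out_weight A w v = (\<Sum>a \<in> {a \<in> A. fst a = v}. w a)"

definition in_weight :: "('a \<times> 'a) set \<Rightarrow> ('a \<times> 'a \<Rightarrow> real) \<Rightarrow> 'a \<Rightarrow> real" where
  "in_weight A w v = (\<Sum>a \<in> {a \<in> A. snd a = v}. w a)"

definition rdiff :: "('a \<times> 'a) set \<Rightarrow> ('a \<times> 'a \<Rightarrow> real) \<Rightarrow> 'a \<Rightarrow> real" where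
  "rdiff A w v = out_weight A w v - in_weight A w v"

definition r_plus :: "'a set \<Rightarrow> ('a \<times> 'a) set \<Rightarrow> ('a \<times> 'a \<Rightarrow> real) \<Rightarrow> real" where
  "r_plus V A w = (\<Sum>v \<in> {v \<in> V. rdiff A w v > 0}. rdiff A w v)"

definition theta :: "'a set \<Rightarrow> ('a \<times> 'a) set \<Rightarrow> ('a \<times> 'a \<Rightarrow> real) \<Rightarrow> real" where
  "theta V A w = r_plus V A w / total_weight A w"

definition lfun :: "real \<Rightarrow> real" where
  "lfun t = (if t < 1/3 then 1/4 + t^2 / (4 * (1 - 2*t)) else t)"

end

theory Submission
  imports Defs
begin

text \<open>Put every vertex v into X independently with probability q v, where q v = c if
r(v) > 0 and q v = 1 - c otherwise. An arc from a vertex with r > 0 to one with r \<le> 0 is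
cut with probability c^2, an arc in the opposite direction with probability (1 - c)^2
\<ge> 2c(1 - c) - c^2, and every other arc with probability c(1 - c). Since r+(D) is the
weight of the first kind of arcs minus that of the second, the expected cut is at least
(w(D) - r+(D)) c(1 - c) + r+(D) c^2. The expectation is affine in each q v, so it can be
rounded vertex by vertex to an actual cut without decreasing it. Choosing c = 1 for
\<theta> \<ge> 1/3 and c = (1 - \<theta>) / (2(1 - 2\<theta>)) otherwise gives l(\<theta>) w(D).\<close>

definition fractional_cut :: "('a \<times> 'a) set \<Rightarrow> ('a \<times> 'a \<Rightarrow> real) \<Rightarrow> ('a \<Rightarrow> real) \<Rightarrow> real" where
  "fractional_cut A w q = (\<Sum>a\<in>A. w a * (q (fst a) * (1 - q (snd a))))"

lemma fractional_cut_affine: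
  assumes "\<forall>a\<in>A. fst a \<noteq> snd a"
  shows "fractional_cut A w q =
    (1 - q x) * fractional_cut A w (q(x := 0)) + q x * fractional_cut A w (q(x := 1))"
  unfolding fractional_cut_def sum_distrib_left sum.distrib[symmetric]
proof (rule sum.cong[OF refl])
  fix a assume "a \<in> A"
  with assms have "fst a \<noteq> snd a" by auto
  then show "w a * (q (fst a) * (1 - q (snd a))) =
    (1 - q x) * (w a * ((q(x := 0)) (fst a) * (1 - (q(x := 0)) (snd a)))) +
    q x * (w a * ((q(x := 1)) (fst a) * (1 - (q(x := 1)) (snd a))))"
    by (cases "fst a = x"; cases "snd a = x") (auto simp: algebra_simps)
qed

lemma fractional_cut_le_update:
  assumes "\<forall>a\<in>A. fst a \<noteq> snd a" and "0 \<le> q x" "q x \<le> 1"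
  obtains b :: real where "b = 0 \<or> b = 1" "fractional_cut A w q \<le> fractional_cut A w (q(x := b))"
proof -
  let ?F0 = "fractional_cut A w (q(x := 0))" and ?F1 = "fractional_cut A w (q(x := 1))"
  have "fractional_cut A w q = (1 - q x) * ?F0 + q x * ?F1"
    by (rule fractional_cut_affine[OF assms(1)])
  also have "\<dots> \<le> (1 - q x) * max ?F0 ?F1 + q x * max ?F0 ?F1"
    using assms(2,3) by (intro add_mono mult_left_mono) auto
  finally have "fractional_cut A w q \<le> max ?F0 ?F1" by (simp add: algebra_simps)
  then show ?thesis
    using that[of 0] that[of 1] by (cases "?F0 \<le> ?F1") auto
qed

lemma fractional_cut_rounding:
  assumes "finite S" and "\<forall>a\<in>A. fst a \<noteq> snd a" and "\<forall>v\<in>S. 0 \<le> q v \<and> q v \<le> 1"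
  shows "\<exists>q'. (\<forall>v\<in>S. q' v = 0 \<or> q' v = 1) \<and> (\<forall>v. v \<notin> S \<longrightarrow> q' v = q v) \<and>
    fractional_cut A w q \<le> fractional_cut A w q'"
  using assms(1,3)
proof (induction S arbitrary: q rule: finite_induct)
  case empty
  then show ?case by blast
next
  case (insert x S)
  obtain b :: real where b: "b = 0 \<or> b = 1" "fractional_cut A w q \<le> fractional_cut A w (q(x := b))"
    using fractional_cut_le_update[OF assms(2)] insert.prems by blast
  have "\<forall>v\<in>S. 0 \<le> (q(x := b)) v \<and> (q(x := b)) v \<le> 1"
    using insert.prems insert.hyps(2) by auto
  from insert.IH[OF this] obtain q' where q':
    "\<forall>v\<in>S. q' v = 0 \<or> q' v = 1" "\<forall>v. v \<notin> S \<longrightarrow> q' v = (q(x := b)) v"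
    "fractional_cut A w (q(x := b)) \<le> fractional_cut A w q'"
    by blast
  have "q' x = b" using q'(2) insert.hyps(2) by simp
  with q' b show ?case by (intro exI[of _ q']) auto
qed

lemma fractional_cut_eq_cut_weight:
  assumes "A \<subseteq> V \<times> V" and "finite A" and "\<forall>v\<in>V. q v = 0 \<or> q v = 1"
  shows "fractional_cut A w q = cut_weight A w {v\<in>V. q v = 1} (V - {v\<in>V. q v = 1})"
proof -
  let ?X = "{v\<in>V. q v = 1}"
  have "cut_weight A w ?X (V - ?X) = (\<Sum>a\<in>A. if fst a \<in> ?X \<and> snd a \<in> V - ?X then w a else 0)"
    unfolding cut_weight_def using sum.inter_filter[OF assms(2)]
    by (simp add: case_prod_beta')
  also have "\<dots> = fractional_cut A w q"
    unfolding fractional_cut_def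
  proof (rule sum.cong[OF refl])
    fix a assume "a \<in> A"
    with assms(1) have "fst a \<in> V" "snd a \<in> V" by auto
    with assms(3) show "(if fst a \<in> ?X \<and> snd a \<in> V - ?X then w a else 0) =
      w a * (q (fst a) * (1 - q (snd a)))"
      by (cases "q (fst a) = 1"; cases "q (snd a) = 1") auto
  qed
  finally show ?thesis ..
qed

lemma fractional_cut_le_mac:
  assumes "weighted_digraph V A w" and "\<forall>v\<in>V. 0 \<le> q v \<and> q v \<le> 1"
  shows "fractional_cut A w q \<le> mac V A w"
proof -
  have fin: "finite V" and AV: "A \<subseteq> V \<times> V" and loopless: "\<forall>a\<in>A. fst a \<noteq> snd a"
    using assms(1) unfolding weighted_digraph_def by auto
  have "finite A" using fin AV finite_subset by blast
  obtain q' where q': "\<forall>v\<in>V. q' v = 0 \<or> q' v = 1" "fractional_cut A w q \<le> fractional_cut A w q'"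
    using fractional_cut_rounding[OF fin loopless assms(2)] by blast
  note q'(2)
  also have "fractional_cut A w q' = cut_weight A w {v\<in>V. q' v = 1} (V - {v\<in>V. q' v = 1})"
    by (rule fractional_cut_eq_cut_weight[OF AV \<open>finite A\<close> q'(1)])
  also have "\<dots> \<le> mac V A w"
    unfolding mac_def using fin by (intro Max_ge) auto
  finally show ?thesis .
qed

lemma sum_out_weight:
  assumes "finite A" and "finite P"
  shows "(\<Sum>v\<in>P. out_weight A w v) = (\<Sum>a\<in>{a\<in>A. fst a \<in> P}. w a)"
proof -
  have "(\<Sum>v\<in>P. out_weight A w v) = (\<Sum>v\<in>P. \<Sum>a\<in>A. if fst a = v then w a else 0)"
    unfolding out_weight_def using assms(1) by (simp add: sum.inter_filter)
  also have "\<dots> = (\<Sum>a\<in>A. if fst a \<in> P then w a else 0)"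
    using assms(2) by (subst sum.swap) (simp add: sum.delta)
  finally show ?thesis using assms(1) by (simp add: sum.inter_filter)
qed

lemma sum_in_weight:
  assumes "finite A" and "finite P"
  shows "(\<Sum>v\<in>P. in_weight A w v) = (\<Sum>a\<in>{a\<in>A. snd a \<in> P}. w a)"
proof -
  have "(\<Sum>v\<in>P. in_weight A w v) = (\<Sum>v\<in>P. \<Sum>a\<in>A. if snd a = v then w a else 0)"
    unfolding in_weight_def using assms(1) by (simp add: sum.inter_filter)
  also have "\<dots> = (\<Sum>a\<in>A. if snd a \<in> P then w a else 0)"
    using assms(2) by (subst sum.swap) (simp add: sum.delta)
  finally show ?thesis using assms(1) by (simp add: sum.inter_filter)
qed

lemma r_plus_eq_arc_sum:
  fixes w :: "'a \<times> 'a \<Rightarrow> real"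
  assumes "finite V" and "finite A"
  defines "P \<equiv> {v\<in>V. rdiff A w v > 0}"
  shows "r_plus V A w = (\<Sum>a\<in>A. w a * (of_bool (fst a \<in> P) - of_bool (snd a \<in> P)))"
proof -
  have "finite P" unfolding P_def using assms(1) by simp
  have "r_plus V A w = (\<Sum>v\<in>P. out_weight A w v) - (\<Sum>v\<in>P. in_weight A w v)"
    unfolding r_plus_def P_def rdiff_def by (simp add: sum_subtractf)
  also have "\<dots> = (\<Sum>a\<in>A. if fst a \<in> P then w a else 0) - (\<Sum>a\<in>A. if snd a \<in> P then w a else 0)"
    unfolding sum_out_weight[OF assms(2) \<open>finite P\<close>] sum_in_weight[OF assms(2) \<open>finite P\<close>]
    using assms(2) by (simp add: sum.inter_filter)
  also have "\<dots> = (\<Sum>a\<in>A. w a * (of_bool (fst a \<in> P) - of_bool (snd a \<in> P)))"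
    unfolding sum_subtractf[symmetric] by (rule sum.cong) auto
  finally show ?thesis .
qed

lemma biased_cut_arc_bound:
  fixes c :: real and s t :: bool
  defines "e \<equiv> of_bool s - of_bool t"
    and "p \<equiv> \<lambda>b. if b then c else 1 - c"
  shows "(1 - e) * (c * (1 - c)) + e * c^2 \<le> p s * (1 - p t)"
proof -
  have "0 \<le> (1 - 2 * c)^2" by simp
  then show ?thesis
    unfolding e_def p_def by (cases s; cases t) (simp_all add: power2_eq_square algebra_simps)
qed

lemma mac_ge_biased_cut:
  assumes wd: "weighted_digraph V A w" and "0 \<le> c" "c \<le> 1"
  shows "(total_weight A w - r_plus V A w) * (c * (1 - c)) + r_plus V A w * c^2 \<le> mac V A w"
proof -
  define P where "P = {v\<in>V. rdiff A w v > 0}"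
  define e where "e = (\<lambda>a. of_bool (fst a \<in> P) - of_bool (snd a \<in> P) :: real)"
  define q where "q = (\<lambda>v. if v \<in> P then c else 1 - c)"
  have fin: "finite V" and AV: "A \<subseteq> V \<times> V" and nonneg: "\<forall>a\<in>A. w a \<ge> 0"
    using wd unfolding weighted_digraph_def by auto
  have "finite A" using fin AV finite_subset by blast
  have "(total_weight A w - r_plus V A w) * (c * (1 - c)) + r_plus V A w * c^2
      = (\<Sum>a\<in>A. w a * ((1 - e a) * (c * (1 - c)) + e a * c^2))"
    unfolding r_plus_eq_arc_sum[OF fin \<open>finite A\<close>] total_weight_def e_def P_def
    by (simp add: algebra_simps sum.distrib sum_subtractf sum_distrib_left sum_distrib_right)
  also have "\<dots> \<le> fractional_cut A w q"
    unfolding fractional_cut_def e_def q_def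
    using nonneg biased_cut_arc_bound by (intro sum_mono mult_left_mono) auto
  also have "\<dots> \<le> mac V A w"
    using fractional_cut_le_mac[OF wd] assms(2,3) unfolding q_def by simp
  finally show ?thesis .
qed

lemma lfun_eq_biased_cut_value:
  fixes t :: real
  assumes "t < 1/3"
  defines "c \<equiv> (1 - t) / (2 * (1 - 2 * t))"
  shows "(1 - t) * (c * (1 - c)) + t * c^2 = lfun t" and "0 \<le> c" and "c \<le> 1"
proof -
  have d: "1 - 2 * t > 0" using assms(1) by simp
  have c_d: "c * (1 - 2 * t) = (1 - t) / 2" unfolding c_def using d by (simp add: field_simps)
  have "(1 - t) * (c * (1 - c)) + t * c^2 = c * ((1 - t) - c * (1 - 2 * t))"
    by (simp add: algebra_simps power2_eq_square)
  also have "\<dots> = (1 - t)^2 / (4 * (1 - 2 * t))"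
    unfolding c_d unfolding c_def using d by (simp add: field_simps power2_eq_square)
  also have "\<dots> = lfun t"
    unfolding lfun_def using assms(1) d by (simp add: field_simps power2_eq_square)
  finally show "(1 - t) * (c * (1 - c)) + t * c^2 = lfun t" .
  show "0 \<le> c" unfolding c_def using assms(1) d by simp
  show "c \<le> 1" unfolding c_def using assms(1) d by (simp add: divide_le_eq)
qed

theorem mainTheorem6:
  fixes V :: "'a set" and A :: "('a \<times> 'a) set" and w :: "'a \<times> 'a \<Rightarrow> real"
  assumes "weighted_digraph V A w"
    and "total_weight A w > 0"
  shows "mac V A w \<ge> lfun (theta V A w) * total_weight A w"
proof -
  define W R t where "W = total_weight A w" and "R = r_plus V A w" and "t = theta V A w"
  have R: "R = t * W" unfolding t_def theta_def R_def W_def using assms(2) by simp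
  have biased_cut: "(1 - t) * (c * (1 - c)) * W + t * c^2 * W \<le> mac V A w"
    if "0 \<le> c" "c \<le> 1" for c
    using mac_ge_biased_cut[OF assms(1) that] unfolding R_def[symmetric] W_def[symmetric] R
    by (simp add: algebra_simps)
  show ?thesis
  proof (cases "t < 1/3")
    case False
    then show ?thesis
      using biased_cut[of 1] unfolding lfun_def t_def[symmetric] W_def[symmetric] by simp
  next
    case True
    note c = lfun_eq_biased_cut_value[OF True]
    show ?thesis
      using biased_cut[OF c(2,3)] unfolding c(1)[symmetric] t_def[symmetric] W_def[symmetric]
      by (simp add: algebra_simps)
  qed
qed

end
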